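(* Let $q$ be a prime power with $q-1=ds$, where $d\ge 3$ and $s$ are positive integers, let $r_0,r_1$ be positive integers and $a_0,a_1\in\mathbb{F}_q^*$. Let $$f(x)=\frac1d\,(a_0x^{r_0}-a_1x^{r_1})\,(1+x^s+\cdots+x^{(d-1)s})+a_1x^{r_1}.$$ Then $f$ is a permutation polynomial of $\mathbb{F}_q$ if and only if $\gcd(r_0r_1,s)=\gcd(r_1,d)=1$ and $a_0^s=a_1^s$. In this case the inverse of $f$ over $\mathbb{F}_q$ is given by $$f^{-1}(x)=\frac1d\left[\left(\frac{x}{a_0}\right)^{\tilde r_0}-\left(\frac{x}{a_1}\right)^{\tilde r_1}\right]\left[1+\left(\frac{x}{a_1}\right)^s+\cdots+\left(\frac{x}{a_1}\right)^{(d-1)s}\right]+\left(\frac{x}{a_1}\right)^{\tilde r_1+us},$$ where, for $i=0,1$, $\tilde r_i$ is a positive integer inverse of $r_i$ modulo $s$ (i.e. $r_i\tilde r_i\equiv1\pmod s$), $r_1'$ is an inverse of $r_1$ modulo $d$, and $u$ is the integer with $0\le u<d$ and $u\equiv r_1'(1-r_1\tilde r_1)/s\pmod d$.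
   Context: A polynomial $f\in\mathbb{F}_q[x]$ is a permutation polynomial of $\mathbb{F}_q$ if it induces a bijection of $\mathbb{F}_q$. A polynomial $g$ is the inverse of $f$ over $\mathbb{F}_q$ if $g(f(c))=c$ for all $c\in\mathbb{F}_q$. Since $d\mid q-1$, $1/d$ makes sense in $\mathbb{F}_q$. *)

theory Defs
  imports "HOL-Computational_Algebra.Polynomial" "HOL-Number_Theory.Cong" "HOL-Library.Cardinality"
begin

definition perm_poly :: "'a::{finite,field} poly \<Rightarrow> bool" where
  "perm_poly f \<longleftrightarrow> bij (poly f)"

definition fpoly :: "nat \<Rightarrow> nat \<Rightarrow> nat \<Rightarrow> nat \<Rightarrow> 'a::field \<Rightarrow> 'a \<Rightarrow> 'a poly" where
  "fpoly d s r0 r1 a0 a1 =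
     smult (inverse (of_nat d))
       ((monom a0 r0 - monom a1 r1) * (\<Sum>i<d. monom 1 (i * s)))
     + monom a1 r1"

definition ginv :: "nat \<Rightarrow> nat \<Rightarrow> nat \<Rightarrow> nat \<Rightarrow> nat \<Rightarrow> 'a::field \<Rightarrow> 'a \<Rightarrow> 'a poly" where
  "ginv d s rt0 rt1 u a0 a1 =
     smult (inverse (of_nat d))
       ((monom (inverse a0 ^ rt0) rt0 - monom (inverse a1 ^ rt1) rt1)
        * (\<Sum>i<d. monom (inverse a1 ^ (i * s)) (i * s)))
     + monom (inverse a1 ^ (rt1 + u * s)) (rt1 + u * s)"

end

theory Submission
  imports Defs
begin

text \<open>For \<open>c \<noteq> 0\<close> the element \<open>z = c^s\<close> is a \<open>d\<close>-th root of unity, so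
  \<open>(1/d)(1 + z + ... + z^(d-1))\<close> is \<open>1\<close> if \<open>c^s = 1\<close> and \<open>0\<close> otherwise: \<open>f\<close> acts as
  \<open>c \<mapsto> a0 c^r0\<close> on the \<open>s\<close>-th roots of unity and as \<open>c \<mapsto> a1 c^r1\<close> on the other units.
  Injectivity on the roots of unity forces \<open>gcd(r0, s) = 1\<close>. Off them, a root of unity
  \<open>y \<noteq> 1\<close> with \<open>y^r1 = 1\<close> would give a collision \<open>f(xy) = f(x)\<close> for any \<open>x\<close> with
  \<open>x^s \<noteq> 1 \<noteq> (xy)^s\<close>, and such \<open>x\<close> exist because \<open>d \<ge> 3\<close>; so \<open>gcd(r1, q - 1) = 1\<close>.
  Then some \<open>x\<close> has \<open>x^r1 = a0/a1\<close>, hence \<open>f(x) = f(1)\<close> unless \<open>x^s = 1\<close>, i.e. unless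
  \<open>a0^s = a1^s\<close>. Conversely, the same selector evaluates the inverse piecewise, and composing
  reduces to \<open>r0 rt0 \<equiv> 1 (mod s)\<close> and \<open>r1 (rt1 + u s) \<equiv> 1 (mod q - 1)\<close>.\<close>

lemma of_nat_CARD_eq_0: "of_nat CARD('a::{finite,field}) = (0::'a)"
proof -
  have "(\<Sum>y\<in>UNIV. y + 1) = (\<Sum>y::'a\<in>UNIV. y)"
    by (rule sum.reindex_bij_witness[of _ "\<lambda>y. y - 1" "\<lambda>y. y + 1"]) auto
  then show ?thesis
    by (simp add: sum.distrib)
qed

lemma two_le_CARD_field: "2 \<le> CARD('a::{finite,field})"
proof -
  have "card {0::'a, 1} \<le> CARD('a)"
    by (intro card_mono) auto
  then show ?thesis
    by simp
qed

lemma finite_field_power_card_minus_one: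
  fixes x :: "'a::{finite,field}"
  assumes "x \<noteq> 0"
  shows "x ^ (CARD('a) - 1) = 1"
proof -
  let ?U = "UNIV - {0::'a}"
  have "(\<Prod>y\<in>?U. x * y) = \<Prod>?U"
    by (rule prod.reindex_bij_witness[of _ "\<lambda>y. y / x" "\<lambda>y. x * y"]) (use assms in auto)
  moreover have "(\<Prod>y\<in>?U. x * y) = x ^ card ?U * \<Prod>?U"
    by (simp add: prod.distrib)
  moreover have "\<Prod>?U \<noteq> 0"
    by simp
  ultimately show ?thesis
    by (simp add: card_Diff_singleton)
qed

lemma power_eq_if_cong:
  fixes x :: "'a::comm_monoid_mult"
  assumes "x ^ k = 1" and "[m = n] (mod k)"
  shows "x ^ m = x ^ n"
proof -
  have reduce: "x ^ j = x ^ (j mod k)" for j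
  proof -
    have "x ^ j = x ^ (k * (j div k)) * x ^ (j mod k)"
      by (simp flip: power_add)
    also have "\<dots> = x ^ (j mod k)"
      by (simp add: power_mult assms(1))
    finally show ?thesis .
  qed
  show ?thesis
    using reduce[of m] reduce[of n] assms(2) by (simp add: cong_def)
qed

lemma power_eq_one_if_dvd:
  fixes y :: "'a::monoid_mult"
  assumes "y ^ e = 1" and "e dvd n"
  shows "y ^ n = 1"
  using assms by (auto elim!: dvdE simp: power_mult)

lemma card_roots_of_unity_le:
  assumes "n > 0"
  shows "card {x::'a::idom. x ^ n = 1} \<le> n"
proof -
  let ?p = "monom (1::'a) n - 1"
  have "coeff ?p n = 1"
    using assms by simp
  then have "?p \<noteq> 0"
    by (metis coeff_0 zero_neq_one)
  moreover have "{x. x ^ n = 1} = {x. poly ?p x = 0}"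
    by (auto simp: poly_monom)
  moreover have "degree ?p \<le> n"
    by (intro degree_diff_le) (auto simp: degree_monom_le)
  ultimately show ?thesis
    using card_poly_roots_bound[of ?p] by simp
qed

lemma scaled_geometric_sum_root_of_unity:
  fixes z X :: "'a::field"
  assumes "z ^ d = 1" and "of_nat d \<noteq> (0::'a)"
  shows "inverse (of_nat d) * (X * (\<Sum>i<d. z ^ i)) = (if z = 1 then X else 0)"
  using assms by (simp add: sum_gp_strict)

text \<open>If the \<open>e\<close>-th power map were injective on the units it would be onto, so every unit
  would be a root of \<open>x\<^sup>m - 1\<close> with \<open>m = (q - 1) / e < q - 1\<close>: too many roots.\<close>
lemma ex_nontrivial_root_of_unity:
  assumes "e dvd CARD('a::{finite,field}) - 1" and "e > 1"
  shows "\<exists>y::'a. y ^ e = 1 \<and> y \<noteq> 1"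
proof (rule ccontr)
  assume no_root: "\<not> ?thesis"
  let ?U = "UNIV - {0::'a}"
  obtain m where m: "CARD('a) - 1 = e * m"
    using assms(1) by blast
  then have "m > 0"
    using two_le_CARD_field[where 'a='a] by (cases m) auto
  then have m_less: "m < CARD('a) - 1"
    using m assms(2) by simp
  have "inj_on (\<lambda>x. x ^ e) ?U"
  proof (rule inj_onI)
    fix x y assume "x \<in> ?U" "y \<in> ?U" "x ^ e = y ^ e"
    then have "(x / y) ^ e = 1"
      by (simp add: power_divide)
    with no_root \<open>y \<in> ?U\<close> show "x = y"
      by auto
  qed
  then have onto: "(\<lambda>x. x ^ e) ` ?U = ?U"
    by (intro endo_inj_surj) auto
  have "?U \<subseteq> {z. z ^ m = 1}"
  proof
    fix z assume "z \<in> ?U"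
    then obtain x where "x \<in> ?U" "z = x ^ e"
      using onto by blast
    then have "z ^ m = x ^ (CARD('a) - 1)"
      unfolding m by (simp add: power_mult)
    with \<open>x \<in> ?U\<close> show "z \<in> {z. z ^ m = 1}"
      using finite_field_power_card_minus_one[of x] by simp
  qed
  then have "card ?U \<le> m"
    using card_mono[of "{z. z ^ m = 1}" ?U] card_roots_of_unity_le[OF \<open>m > 0\<close>, where 'a='a]
    by simp
  then show False
    using m_less by (simp add: card_Diff_singleton)
qed

lemma coprime_if_inj_on_power_roots_of_unity:
  fixes r s :: nat
  assumes "s dvd CARD('a::{finite,field}) - 1" and "s > 0"
    and "inj_on (\<lambda>c::'a. c ^ r) {c. c ^ s = 1}"
  shows "coprime r s"
proof (rule ccontr)
  assume "\<not> coprime r s"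
  then have "gcd r s \<noteq> 1"
    by (simp add: coprime_iff_gcd_eq_1)
  moreover have "gcd r s \<noteq> 0"
    using \<open>s > 0\<close> by simp
  ultimately have "gcd r s > 1"
    by linarith
  moreover have "gcd r s dvd CARD('a) - 1"
    using assms(1) by (meson dvd_trans gcd_dvd2)
  ultimately obtain y :: 'a where y: "y ^ gcd r s = 1" "y \<noteq> 1"
    using ex_nontrivial_root_of_unity by blast
  have "y ^ s = 1" and "y ^ r = 1"
    using power_eq_one_if_dvd[OF y(1)] by simp_all
  then have "y = 1"
    using inj_onD[OF assms(3), of y 1] by simp
  with y(2) show False ..
qed

lemma ex_avoiding_roots_of_unity:
  fixes y :: "'a::{finite,field}"
  assumes "2 * s + 1 < CARD('a)" and "s > 0" and "y \<noteq> 0"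
  shows "\<exists>x. x \<noteq> 0 \<and> x ^ s \<noteq> 1 \<and> (x * y) ^ s \<noteq> 1"
proof -
  let ?R = "{x::'a. x ^ s = 1}"
  have "card (insert 0 (?R \<union> (\<lambda>x. x / y) ` ?R)) \<le> card (?R \<union> (\<lambda>x. x / y) ` ?R) + 1"
    by (simp add: card_insert_if)
  also have "\<dots> \<le> card ?R + card ((\<lambda>x. x / y) ` ?R) + 1"
    using card_Un_le by simp
  also have "\<dots> \<le> 2 * s + 1"
    using card_roots_of_unity_le[OF \<open>s > 0\<close>, where 'a='a] card_image_le[of ?R "\<lambda>x. x / y"]
    by simp
  finally have "insert 0 (?R \<union> (\<lambda>x. x / y) ` ?R) \<noteq> UNIV"
    using assms(1) by auto
  then obtain x where x: "x \<notin> insert 0 (?R \<union> (\<lambda>x. x / y) ` ?R)"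
    by blast
  have "(x * y) ^ s \<noteq> 1"
  proof
    assume "(x * y) ^ s = 1"
    then have "x * y / y \<in> (\<lambda>x. x / y) ` ?R"
      by blast
    with x \<open>y \<noteq> 0\<close> show False
      by simp
  qed
  with x show ?thesis
    by blast
qed

lemma coprime_if_inj_on_power_non_roots_of_unity:
  fixes r s :: nat
  assumes "2 * s + 1 < CARD('a::{finite,field})" and "s > 0"
    and "inj_on (\<lambda>c::'a. c ^ r) {c. c \<noteq> 0 \<and> c ^ s \<noteq> 1}"
  shows "coprime r (CARD('a) - 1)"
proof (rule ccontr)
  assume "\<not> coprime r (CARD('a) - 1)"
  then have "gcd r (CARD('a) - 1) \<noteq> 1"
    by (simp add: coprime_iff_gcd_eq_1)
  moreover have gcd_nonzero: "gcd r (CARD('a) - 1) \<noteq> 0"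
    using assms(1) by simp
  ultimately have gcd_gt_1: "gcd r (CARD('a) - 1) > 1"
    by linarith
  then obtain y :: 'a where y: "y ^ gcd r (CARD('a) - 1) = 1" "y \<noteq> 1"
    using ex_nontrivial_root_of_unity[OF gcd_dvd2 gcd_gt_1] by blast
  have "y \<noteq> 0"
  proof
    assume "y = 0"
    then have "y ^ gcd r (CARD('a) - 1) = 0"
      using gcd_nonzero by simp
    with y(1) show False
      by simp
  qed
  have "y ^ r = 1"
    using power_eq_one_if_dvd[OF y(1)] by simp
  obtain x where x: "x \<noteq> 0" "x ^ s \<noteq> 1" "(x * y) ^ s \<noteq> 1"
    using ex_avoiding_roots_of_unity[OF assms(1,2) \<open>y \<noteq> 0\<close>] by blast
  have "(x * y) ^ r = x ^ r"
    using \<open>y ^ r = 1\<close> by (simp add: power_mult_distrib)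
  moreover have "x * y \<in> {c. c \<noteq> 0 \<and> c ^ s \<noteq> 1}" and "x \<in> {c. c \<noteq> 0 \<and> c ^ s \<noteq> 1}"
    using x \<open>y \<noteq> 0\<close> by simp_all
  ultimately have "x * y = x"
    by (rule inj_onD[OF assms(3)])
  with x(1) y(2) show False
    by simp
qed

lemma ex_power_root_if_coprime:
  fixes b :: "'a::{finite,field}"
  assumes "coprime r (CARD('a) - 1)" and "b \<noteq> 0"
  shows "\<exists>x. x \<noteq> 0 \<and> x ^ r = b"
proof -
  obtain t where "[r * t = 1] (mod CARD('a) - 1)"
    using cong_solve_coprime_nat[OF assms(1)] by auto
  then have "[t * r = 1] (mod CARD('a) - 1)"
    by (simp add: mult.commute)
  have "(b ^ t) ^ r = b ^ (t * r)"
    by (simp add: power_mult)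
  also have "\<dots> = b ^ 1"
    by (rule power_eq_if_cong[OF finite_field_power_card_minus_one[OF assms(2)]]) fact
  finally have "(b ^ t) ^ r = b"
    by simp
  moreover have "b ^ t \<noteq> 0"
    using assms(2) by simp
  ultimately show ?thesis
    by blast
qed

definition split_power_map :: "nat \<Rightarrow> nat \<Rightarrow> nat \<Rightarrow> 'a::field \<Rightarrow> 'a \<Rightarrow> 'a \<Rightarrow> 'a" where
  "split_power_map s r0 r1 a0 a1 c =
     (if c = 0 then 0 else if c ^ s = 1 then a0 * c ^ r0 else a1 * c ^ r1)"

lemma of_nat_neq_0_if_dvd_card_minus_one:
  assumes "d dvd CARD('a::{finite,field}) - 1"
  shows "of_nat d \<noteq> (0::'a)"
proof
  assume "of_nat d = (0::'a)"
  moreover obtain k where "CARD('a) - 1 = d * k"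
    using assms by blast
  ultimately have "of_nat (CARD('a) - 1) = (0::'a)"
    by simp
  moreover have "of_nat (CARD('a) - 1) + 1 = (of_nat CARD('a) :: 'a)"
    by (simp add: of_nat_diff)
  ultimately show False
    using of_nat_CARD_eq_0[where 'a='a] by simp
qed

lemma poly_fpoly:
  fixes a0 a1 :: "'a::{finite,field}"
  assumes card: "CARD('a) - 1 = d * s" and "r0 > 0" and "r1 > 0"
  shows "poly (fpoly d s r0 r1 a0 a1) = split_power_map s r0 r1 a0 a1"
proof
  fix c :: 'a
  have "of_nat d \<noteq> (0::'a)"
    using card by (intro of_nat_neq_0_if_dvd_card_minus_one) simp
  have "poly (\<Sum>i<d. monom 1 (i * s)) c = (\<Sum>i<d. (c ^ s) ^ i)"
    by (simp add: poly_sum poly_monom power_mult[symmetric] mult.commute)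
  then have "poly (fpoly d s r0 r1 a0 a1) c =
      inverse (of_nat d) * ((a0 * c ^ r0 - a1 * c ^ r1) * (\<Sum>i<d. (c ^ s) ^ i)) + a1 * c ^ r1"
    by (simp add: fpoly_def poly_monom)
  also have "\<dots> = split_power_map s r0 r1 a0 a1 c"
  proof (cases "c = 0")
    case True
    then show ?thesis
      using assms by (simp add: split_power_map_def zero_power)
  next
    case False
    then have "(c ^ s) ^ d = 1"
      using finite_field_power_card_minus_one[of c] card by (simp add: power_mult[symmetric] mult.commute)
    then show ?thesis
      using False \<open>of_nat d \<noteq> 0\<close>
      by (simp add: scaled_geometric_sum_root_of_unity split_power_map_def)
  qed
  finally show "poly (fpoly d s r0 r1 a0 a1) c = split_power_map s r0 r1 a0 a1 c" .
qed

lemma poly_ginv: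
  fixes y a0 a1 :: "'a::{finite,field}"
  assumes card: "CARD('a) - 1 = d * s" and "rt0 > 0" and "rt1 > 0" and "a1 \<noteq> 0"
  shows "poly (ginv d s rt0 rt1 u a0 a1) y =
    (if y = 0 then 0 else if (y / a1) ^ s = 1 then (y / a0) ^ rt0 else (y / a1) ^ (rt1 + u * s))"
proof -
  have monom_inverse: "poly (monom (inverse a ^ n) n) y = (y / a) ^ n" for a :: 'a and n
    by (simp add: poly_monom power_divide divide_inverse power_inverse power_mult_distrib mult.commute)
  have "of_nat d \<noteq> (0::'a)"
    using card by (intro of_nat_neq_0_if_dvd_card_minus_one) simp
  have "poly (\<Sum>i<d. monom (inverse a1 ^ (i * s)) (i * s)) y = (\<Sum>i<d. ((y / a1) ^ s) ^ i)"
    by (simp add: poly_sum monom_inverse power_mult[symmetric] mult.commute)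
  then have "poly (ginv d s rt0 rt1 u a0 a1) y =
      inverse (of_nat d) * (((y / a0) ^ rt0 - (y / a1) ^ rt1) * (\<Sum>i<d. ((y / a1) ^ s) ^ i))
        + (y / a1) ^ (rt1 + u * s)"
    by (simp add: ginv_def monom_inverse)
  also have "\<dots> =
      (if y = 0 then 0 else if (y / a1) ^ s = 1 then (y / a0) ^ rt0 else (y / a1) ^ (rt1 + u * s))"
  proof (cases "y = 0")
    case True
    then show ?thesis
      using assms by (simp add: zero_power)
  next
    case False
    then have "((y / a1) ^ s) ^ d = 1"
      using finite_field_power_card_minus_one[of "y / a1"] card \<open>a1 \<noteq> 0\<close>
      by (simp add: power_mult[symmetric] mult.commute)
    moreover have "(y / a1) ^ (rt1 + u * s) = (y / a1) ^ rt1" if "(y / a1) ^ s = 1"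
      using that by (simp add: power_add power_mult mult.commute)
    ultimately show ?thesis
      using False \<open>of_nat d \<noteq> 0\<close> by (simp add: scaled_geometric_sum_root_of_unity)
  qed
  finally show ?thesis .
qed

text \<open>With \<open>1 - r rt = w s\<close> one has \<open>r (rt + u s) - 1 = s (r u - w)\<close>, and
  \<open>r u - w \<equiv> r r' w - w \<equiv> 0 (mod d)\<close>.\<close>
lemma cong_mult_inverse_lift:
  fixes r rt u d s :: nat and r' :: int
  assumes "[r * rt = 1] (mod s)" and "[int r * r' = 1] (mod int d)"
    and "[int u = r' * ((1 - int r * int rt) div int s)] (mod int d)"
  shows "[r * (rt + u * s) = 1] (mod d * s)"
proof -
  define w where "w = (1 - int r * int rt) div int s"
  have "int s dvd 1 - int r * int rt"
    using assms(1) by (simp add: cong_iff_dvd_diff dvd_diff_commute flip: cong_int_iff)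
  then have w: "1 - int r * int rt = w * int s"
    unfolding w_def by simp
  obtain k1 where k1: "int r * r' - 1 = int d * k1"
    using assms(2) by (auto simp: cong_iff_dvd_diff elim!: dvdE)
  obtain k2 where k2: "int u - r' * w = int d * k2"
    using assms(3) by (auto simp: cong_iff_dvd_diff w_def elim!: dvdE)
  have "int (r * (rt + u * s)) - int 1 = int (d * s) * (k1 * w + int r * k2)"
    using w k1 k2 by simp algebra
  then have "[int (r * (rt + u * s)) = int 1] (mod int (d * s))"
    by (simp add: cong_iff_dvd_diff)
  then show ?thesis
    by (simp only: cong_int_iff)
qed

lemma ginv_split_power_map:
  fixes a0 a1 c :: "'a::{finite,field}"
  assumes card: "CARD('a) - 1 = d * s" and "a0 \<noteq> 0" and "a1 \<noteq> 0" and "a0 ^ s = a1 ^ s"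
    and "rt0 > 0" and "rt1 > 0"
    and rt0: "[r0 * rt0 = 1] (mod s)" and rt1: "[r1 * (rt1 + u * s) = 1] (mod d * s)"
  shows "poly (ginv d s rt0 rt1 u a0 a1) (split_power_map s r0 r1 a0 a1 c) = c"
proof -
  note ginv = poly_ginv[OF card \<open>rt0 > 0\<close> \<open>rt1 > 0\<close> \<open>a1 \<noteq> 0\<close>]
  consider "c = 0" | "c \<noteq> 0" "c ^ s = 1" | "c \<noteq> 0" "c ^ s \<noteq> 1"
    by blast
  then show ?thesis
  proof cases
    case 1
    then show ?thesis
      by (simp add: split_power_map_def ginv)
  next
    case 2
    have "(a0 * c ^ r0 / a1) ^ s = (a0 ^ s / a1 ^ s) * (c ^ s) ^ r0"
      by (simp add: power_divide power_mult_distrib flip: power_mult) (simp add: mult.commute)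
    then have "(a0 * c ^ r0 / a1) ^ s = 1"
      using 2 assms(2-4) by simp
    moreover have "(a0 * c ^ r0 / a0) ^ rt0 = c ^ (r0 * rt0)"
      using \<open>a0 \<noteq> 0\<close> by (simp add: power_mult)
    moreover have "c ^ (r0 * rt0) = c"
      using power_eq_if_cong[OF \<open>c ^ s = 1\<close> rt0] by simp
    ultimately show ?thesis
      using 2 assms(2,3) by (simp add: split_power_map_def ginv)
  next
    case 3
    have "c ^ (d * s) = 1"
      using finite_field_power_card_minus_one[OF \<open>c \<noteq> 0\<close>] card by simp
    have "(c ^ r1) ^ s \<noteq> 1"
    proof
      assume "(c ^ r1) ^ s = 1"
      have "(c ^ s) ^ d = 1"
        using \<open>c ^ (d * s) = 1\<close> by (simp add: power_mult[symmetric] mult.commute)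
      moreover have "[r1 * (rt1 + u * s) = 1] (mod d)"
        using rt1 cong_modulus_mult_nat by blast
      ultimately have "(c ^ s) ^ (r1 * (rt1 + u * s)) = (c ^ s) ^ 1"
        by (rule power_eq_if_cong)
      moreover have "(c ^ s) ^ r1 = 1"
        using \<open>(c ^ r1) ^ s = 1\<close> by (metis power_mult mult.commute)
      ultimately show False
        using 3 by (simp add: power_mult)
    qed
    moreover have "(c ^ r1) ^ (rt1 + u * s) = c"
      using power_eq_if_cong[OF \<open>c ^ (d * s) = 1\<close> rt1] by (simp add: power_mult)
    ultimately show ?thesis
      using 3 assms(2,3) by (simp add: split_power_map_def ginv)
  qed
qed

lemma ex_pos_inverse_mod_if_coprime:
  fixes r m :: nat
  assumes "coprime r m"
  shows "\<exists>t>0. [r * t = 1] (mod m)"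
proof -
  obtain t where t: "[r * t = 1] (mod m)"
    using cong_solve_coprime_nat[OF assms] by auto
  then have "[r * (t + m) = 1] (mod m)"
    by (simp add: cong_def algebra_simps)
  moreover have "t + m > 0"
    using t by (cases "m = 0") (auto simp: cong_def)
  ultimately show ?thesis
    by blast
qed

lemma inj_split_power_map_iff:
  fixes a0 a1 :: "'a::{finite,field}"
  assumes card: "CARD('a) - 1 = d * s" and "d \<ge> 3" and "a0 \<noteq> 0" and "a1 \<noteq> 0"
  shows "inj (split_power_map s r0 r1 a0 a1) \<longleftrightarrow>
    coprime r0 s \<and> coprime r1 (d * s) \<and> a0 ^ s = a1 ^ s"
    (is "inj ?F \<longleftrightarrow> _")
proof
  assume inj: "inj ?F"
  have "s > 0"
    using card two_le_CARD_field[where 'a='a] by (cases s) auto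
  have "inj_on (\<lambda>c. c ^ r0) {c::'a. c ^ s = 1}"
  proof (rule inj_onI)
    fix b c :: 'a
    assume "b \<in> {c. c ^ s = 1}" "c \<in> {c. c ^ s = 1}" "b ^ r0 = c ^ r0"
    then have "?F b = ?F c"
      using \<open>s > 0\<close> by (auto simp: split_power_map_def zero_power)
    then show "b = c"
      by (rule injD[OF inj])
  qed
  then have "coprime r0 s"
    using card \<open>s > 0\<close> by (intro coprime_if_inj_on_power_roots_of_unity) simp_all
  have "inj_on (\<lambda>c. c ^ r1) {c::'a. c \<noteq> 0 \<and> c ^ s \<noteq> 1}"
  proof (rule inj_onI)
    fix b c :: 'a
    assume "b \<in> {c. c \<noteq> 0 \<and> c ^ s \<noteq> 1}" "c \<in> {c. c \<noteq> 0 \<and> c ^ s \<noteq> 1}" "b ^ r1 = c ^ r1"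
    then have "?F b = ?F c"
      by (simp add: split_power_map_def)
    then show "b = c"
      by (rule injD[OF inj])
  qed
  moreover have "2 * s + 1 < CARD('a)"
    using card \<open>d \<ge> 3\<close> \<open>s > 0\<close> mult_le_mono1[of 3 d s] by linarith
  ultimately have "coprime r1 (CARD('a) - 1)"
    using \<open>s > 0\<close> by (intro coprime_if_inj_on_power_non_roots_of_unity)
  then have "coprime r1 (d * s)"
    using card by simp
  then obtain x :: 'a where "x \<noteq> 0" and x: "x ^ r1 = a0 / a1"
    using ex_power_root_if_coprime[of r1 "a0 / a1"] card assms(3,4) by auto
  have "a0 ^ s = a1 ^ s"
  proof (cases "x ^ s = 1")
    case True
    have "(a0 / a1) ^ s = (x ^ s) ^ r1"
      unfolding x[symmetric] by (simp add: power_mult[symmetric] mult.commute)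
    with True have "(a0 / a1) ^ s = 1"
      by simp
    then show ?thesis
      using \<open>a1 \<noteq> 0\<close> by (simp add: power_divide)
  next
    case False
    then have "?F x = ?F 1"
      using \<open>x \<noteq> 0\<close> x \<open>a1 \<noteq> 0\<close> by (simp add: split_power_map_def)
    then have "x = 1"
      by (rule injD[OF inj])
    with False show ?thesis
      by simp
  qed
  with \<open>coprime r0 s\<close> \<open>coprime r1 (d * s)\<close> show "coprime r0 s \<and> coprime r1 (d * s) \<and> a0 ^ s = a1 ^ s"
    by blast
next
  assume conds: "coprime r0 s \<and> coprime r1 (d * s) \<and> a0 ^ s = a1 ^ s"
  obtain rt0 where "rt0 > 0" "[r0 * rt0 = 1] (mod s)"
    using ex_pos_inverse_mod_if_coprime conds by blast
  obtain rt1 where "rt1 > 0" "[r1 * rt1 = 1] (mod d * s)"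
    using ex_pos_inverse_mod_if_coprime conds by blast
  have "poly (ginv d s rt0 rt1 0 a0 a1) (?F c) = c" for c
    using ginv_split_power_map[OF card assms(3,4), of rt0 rt1 r0 r1 0] conds
      \<open>rt0 > 0\<close> \<open>rt1 > 0\<close> \<open>[r0 * rt0 = 1] (mod s)\<close> \<open>[r1 * rt1 = 1] (mod d * s)\<close>
    by simp
  then show "inj ?F"
    by (intro inj_on_inverseI)
qed

theorem corollary4p3:
  fixes d s r0 r1 :: nat and a0 a1 :: "'a::{finite,field}"
  assumes "CARD('a) - 1 = d * s" and "d \<ge> 3" and "s > 0"
    and "r0 > 0" and "r1 > 0" and "a0 \<noteq> 0" and "a1 \<noteq> 0"
  shows "(perm_poly (fpoly d s r0 r1 a0 a1) \<longleftrightarrow>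
            (coprime (r0 * r1) s \<and> coprime r1 d \<and> a0 ^ s = a1 ^ s))
       \<and> (perm_poly (fpoly d s r0 r1 a0 a1) \<longrightarrow>
            (\<forall>rt0 rt1 :: nat. \<forall>r1' :: int. \<forall>u :: nat.
               rt0 > 0 \<longrightarrow> rt1 > 0 \<longrightarrow>
               [r0 * rt0 = 1] (mod s) \<longrightarrow> [r1 * rt1 = 1] (mod s) \<longrightarrow>
               [int r1 * r1' = 1] (mod int d) \<longrightarrow>
               u < d \<longrightarrow>
               [int u = r1' * ((1 - int r1 * int rt1) div int s)] (mod int d) \<longrightarrow>
               (\<forall>c. poly (ginv d s rt0 rt1 u a0 a1) (poly (fpoly d s r0 r1 a0 a1) c) = c)))"
proof -
  have f: "poly (fpoly d s r0 r1 a0 a1) = split_power_map s r0 r1 a0 a1"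
    using assms(1,4,5) by (rule poly_fpoly)
  have "perm_poly (fpoly d s r0 r1 a0 a1) \<longleftrightarrow> inj (split_power_map s r0 r1 a0 a1)"
    unfolding perm_poly_def f by (auto simp: bij_def finite_UNIV_inj_surj)
  also have "\<dots> \<longleftrightarrow> coprime r0 s \<and> coprime r1 (d * s) \<and> a0 ^ s = a1 ^ s"
    using assms(1,2,6,7) by (rule inj_split_power_map_iff)
  also have "\<dots> \<longleftrightarrow> coprime (r0 * r1) s \<and> coprime r1 d \<and> a0 ^ s = a1 ^ s"
    by auto
  finally have perm_poly_iff: "perm_poly (fpoly d s r0 r1 a0 a1) \<longleftrightarrow>
      coprime (r0 * r1) s \<and> coprime r1 d \<and> a0 ^ s = a1 ^ s" .
  show ?thesis
  proof (intro conjI impI allI perm_poly_iff)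
    fix rt0 rt1 u :: nat and r1' :: int and c :: 'a
    assume "perm_poly (fpoly d s r0 r1 a0 a1)" and "rt0 > 0" "rt1 > 0"
      and "[r0 * rt0 = 1] (mod s)" "[r1 * rt1 = 1] (mod s)" "[int r1 * r1' = 1] (mod int d)"
      and "[int u = r1' * ((1 - int r1 * int rt1) div int s)] (mod int d)"
    then show "poly (ginv d s rt0 rt1 u a0 a1) (poly (fpoly d s r0 r1 a0 a1) c) = c"
      unfolding f perm_poly_iff
      using ginv_split_power_map[OF assms(1,6,7)] cong_mult_inverse_lift by blast
  qed
qed

end
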